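(* Let $T$ be a $2\times3\times2$ quaternion tensor, i.e. $T=(A;B;C)$ with $A,B,C\in M_2(\mathbb{H})$. Then $\mathrm{rank}(T)\le3$.
   Context: $\mathbb{H}$ denotes the real quaternions. An $n_1\times n_2\times n_3$ quaternion tensor is an array $T=(T_{ijk})$ with entries in $\mathbb{H}$, $1\le i\le n_1$, $1\le j\le n_2$, $1\le k\le n_3$; it is written $T=(A_1;\dots;A_{n_2})$ where the frontal slice $A_j$ is the $n_1\times n_3$ matrix $(T_{ijk})_{i,k}$. A nonzero tensor is simple if $T_{ijk}=a_ib_jc_k$ (quaternion product in this order) for some $\vec a\in\mathbb{H}^{n_1},\vec b\in\mathbb{H}^{n_2},\vec c\in\mathbb{H}^{n_3}$. The rank of $T$ is the least number of simple tensors summing to $T$ (the zero tensor has rank $0$). *)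

theory Defs
  imports Main "HOL.Real"
begin

datatype quat = Quat (Re: real) (Im1: real) (Im2: real) (Im3: real)

lemma quat_eqI: "Re x = Re y \<Longrightarrow> Im1 x = Im1 y \<Longrightarrow> Im2 x = Im2 y \<Longrightarrow> Im3 x = Im3 y \<Longrightarrow> x = y"
  by (cases x, cases y) simp

instantiation quat :: ring_1
begin
definition "0 = Quat 0 0 0 0"
definition "1 = Quat 1 0 0 0"
definition "x + y = Quat (Re x + Re y) (Im1 x + Im1 y) (Im2 x + Im2 y) (Im3 x + Im3 y)"
definition "x - y = Quat (Re x - Re y) (Im1 x - Im1 y) (Im2 x - Im2 y) (Im3 x - Im3 y)"
definition "- x = Quat (- Re x) (- Im1 x) (- Im2 x) (- Im3 x)"
definition "x * y = Quat
   (Re x * Re y - Im1 x * Im1 y - Im2 x * Im2 y - Im3 x * Im3 y)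
   (Re x * Im1 y + Im1 x * Re y + Im2 x * Im3 y - Im3 x * Im2 y)
   (Re x * Im2 y - Im1 x * Im3 y + Im2 x * Re y + Im3 x * Im1 y)
   (Re x * Im3 y + Im1 x * Im2 y - Im2 x * Im1 y + Im3 x * Re y)"
instance
proof
  show "(0::quat) \<noteq> 1" by (simp add: zero_quat_def one_quat_def)
qed (rule quat_eqI; simp add: zero_quat_def one_quat_def plus_quat_def
      minus_quat_def uminus_quat_def times_quat_def algebra_simps)+
end

text \<open>An n1 x n2 x n3 quaternion tensor is represented by a function
  T :: nat => nat => nat => quat, of which only the entries T i j k with
  i < n1, j < n2, k < n3 (0-based indices) are relevant.\<close>

type_synonym qtensor = "nat \<Rightarrow> nat \<Rightarrow> nat \<Rightarrow> quat"

definition simple_tensor :: "nat \<Rightarrow> nat \<Rightarrow> nat \<Rightarrow> qtensor \<Rightarrow> bool" where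
  "simple_tensor n1 n2 n3 S \<longleftrightarrow>
     (\<exists>i<n1. \<exists>j<n2. \<exists>k<n3. S i j k \<noteq> 0) \<and>
     (\<exists>a b c :: nat \<Rightarrow> quat. \<forall>i<n1. \<forall>j<n2. \<forall>k<n3. S i j k = a i * b j * c k)"

definition tensor_rank :: "nat \<Rightarrow> nat \<Rightarrow> nat \<Rightarrow> qtensor \<Rightarrow> nat" where
  "tensor_rank n1 n2 n3 T = (LEAST r. \<exists>Ss :: qtensor list. length Ss = r \<and>
      (\<forall>S\<in>set Ss. simple_tensor n1 n2 n3 S) \<and>
      (\<forall>i<n1. \<forall>j<n2. \<forall>k<n3. T i j k = (\<Sum>S\<leftarrow>Ss. S i j k)))"

end

theory Submission
  imports Defs "Jordan_Normal_Form.Spectral_Radius"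
begin

text \<open>The simple tensor (a_i b_j c_k) has frontal slices a b_j c^T, so rank T \<le> 3 as soon
  as there are columns a_1, a_2, a_3 and rows c_1, c_2, c_3 such that every slice of T has the
  form a_1 \<beta>_1 c_1 + a_2 \<beta>_2 c_2 + a_3 \<beta>_3 c_3. If all three slices are singular they have
  rank one and serve as the three dyads themselves. Otherwise, after multiplying by an inverse,
  one slice is the identity, and a similarity (which preserves the property) makes a second slice
  triangular; this uses a right eigenvector of a quaternion 2 x 2 matrix, obtained from its
  complex 4 x 4 representation. A triangular matrix whose diagonal entries are not conjugate is
  diagonalised by solving a Sylvester equation; in the remaining cases the columns and rows are
  written down explicitly.\<close>

definition quat_norm_sq :: "quat \<Rightarrow> real" where
  "quat_norm_sq x = (quat.Re x)\<^sup>2 + (Im1 x)\<^sup>2 + (Im2 x)\<^sup>2 + (Im3 x)\<^sup>2"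

lemma quat_eq_0_iff: "x = 0 \<longleftrightarrow> quat.Re x = 0 \<and> Im1 x = 0 \<and> Im2 x = 0 \<and> Im3 x = 0"
  by (cases x) (simp add: zero_quat_def)

lemma quat_norm_sq_pos: "x \<noteq> 0 \<Longrightarrow> quat_norm_sq x > 0"
  by (auto simp: quat_norm_sq_def quat_eq_0_iff add_pos_nonneg add_nonneg_pos)

instantiation quat :: division_ring
begin
definition "inverse x = Quat (quat.Re x / quat_norm_sq x) (- Im1 x / quat_norm_sq x)
   (- Im2 x / quat_norm_sq x) (- Im3 x / quat_norm_sq x)"
definition "x div (y::quat) = x * inverse y"
instance
proof
  fix x :: quat
  assume "x \<noteq> 0"
  then have n: "quat_norm_sq x \<noteq> 0" using quat_norm_sq_pos by force
  show "inverse x * x = 1" "x * inverse x = 1"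
    by (rule quat_eqI, simp_all add: inverse_quat_def times_quat_def one_quat_def field_simps n,
        simp_all add: quat_norm_sq_def power2_eq_square)+
qed (simp_all add: divide_quat_def inverse_quat_def zero_quat_def quat_norm_sq_def)
end

definition quat_cnj :: "quat \<Rightarrow> quat" where
  "quat_cnj x = Quat (quat.Re x) (- Im1 x) (- Im2 x) (- Im3 x)"

lemma quat_cnj_plus_commute: "(quat_cnj n + n) * x = x * (quat_cnj n + n)"
  by (rule quat_eqI) (simp_all add: quat_cnj_def plus_quat_def times_quat_def algebra_simps)

lemma quat_cnj_times_commute: "(quat_cnj n * n) * x = x * (quat_cnj n * n)"
  by (rule quat_eqI) (simp_all add: quat_cnj_def times_quat_def algebra_simps)

text \<open>The real polynomial X^2 - 2 Re(n) X + |n|^2 annihilating n, evaluated at l.\<close>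
definition quat_charpoly :: "quat \<Rightarrow> quat \<Rightarrow> quat" where
  "quat_charpoly n l = l * l - (quat_cnj n + n) * l + quat_cnj n * n"

text \<open>Since the coefficients of quat_charpoly n are real, F = quat_charpoly n l commutes with l,
  and y = l c - c (quat_cnj n) satisfies l y - y n = F c; so x = F^-1 y solves the equation.\<close>
lemma quat_sylvester_solvable:
  assumes "quat_charpoly n l \<noteq> 0"
  shows "\<exists>x. l * x - x * n = c"
proof -
  define s where "s = quat_cnj n + n"
  define p where "p = quat_cnj n * n"
  define F where "F = quat_charpoly n l"
  have s: "s * x = x * s" and p: "p * x = x * p" for x
    unfolding s_def p_def by (rule quat_cnj_plus_commute quat_cnj_times_commute)+
  have F: "F = l * l - s * l + p"
    by (simp add: F_def quat_charpoly_def s_def p_def)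
  define y where "y = l * c - c * quat_cnj n"
  have "l * y - y * n = l * l * c - (l * c) * s + c * p"
    by (simp add: y_def s_def p_def algebra_simps)
  also have "\<dots> = l * l * c - s * (l * c) + p * c"
    by (simp only: s[of "l * c"] p[of c])
  also have "\<dots> = F * c"
    by (simp add: F algebra_simps)
  finally have y: "l * y - y * n = F * c" .
  have "l * F = l * l * l - (l * s) * l + l * p"
    by (simp add: F algebra_simps)
  also have "\<dots> = l * l * l - (s * l) * l + p * l"
    by (simp only: s[of l] p[of l])
  also have "\<dots> = F * l"
    by (simp add: F algebra_simps)
  finally have "l * F = F * l" .
  then have "l * inverse F = inverse F * l"
    by (metis F_def assms mult.assoc mult_1_left mult_1_right left_inverse right_inverse)
  then have "l * (inverse F * y) - (inverse F * y) * n = inverse F * (l * y - y * n)"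
    by (simp add: algebra_simps flip: mult.assoc)
  also have "\<dots> = c"
    using assms by (simp add: y F_def flip: mult.assoc)
  finally show ?thesis by blast
qed

lemma quat_charpoly_eq_0D:
  assumes "quat_charpoly n l = 0"
  shows "quat.Re l = quat.Re n"
    and "(Im1 l)\<^sup>2 + (Im2 l)\<^sup>2 + (Im3 l)\<^sup>2 = (Im1 n)\<^sup>2 + (Im2 n)\<^sup>2 + (Im3 n)\<^sup>2"
proof -
  obtain a u1 u2 u3 where l: "l = Quat a u1 u2 u3" by (cases l)
  obtain b v1 v2 v3 where n: "n = Quat b v1 v2 v3" by (cases n)
  have re: "(a - b)\<^sup>2 + (v1\<^sup>2 + v2\<^sup>2 + v3\<^sup>2) = u1\<^sup>2 + u2\<^sup>2 + u3\<^sup>2"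
    and im: "(a - b) * u1 = 0" "(a - b) * u2 = 0" "(a - b) * u3 = 0"
    using assms[unfolded quat_eq_0_iff]
    by (simp_all add: l n quat_charpoly_def quat_cnj_def times_quat_def plus_quat_def
        minus_quat_def power2_eq_square algebra_simps)
  have "a = b"
  proof (rule ccontr)
    assume "a \<noteq> b"
    then have "u1 = 0" "u2 = 0" "u3 = 0" using im by simp_all
    then have "(a - b)\<^sup>2 + (v1\<^sup>2 + v2\<^sup>2 + v3\<^sup>2) = 0" using re by simp
    moreover have "(a - b)\<^sup>2 > 0" using \<open>a \<noteq> b\<close> by simp
    ultimately show False by (smt (verit) zero_le_power2)
  qed
  then show "quat.Re l = quat.Re n"
    and "(Im1 l)\<^sup>2 + (Im2 l)\<^sup>2 + (Im3 l)\<^sup>2 = (Im1 n)\<^sup>2 + (Im2 n)\<^sup>2 + (Im3 n)\<^sup>2"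
    using re by (simp_all add: l n)
qed

text \<open>If the imaginary parts u and v have equal length, w = |u|^2 - v u intertwines them
  unless v = -u, in which case any nonzero imaginary quaternion orthogonal to u does.\<close>
lemma quat_similar_of_eq_Re_norm:
  assumes "quat.Re l = quat.Re n"
    and "(Im1 l)\<^sup>2 + (Im2 l)\<^sup>2 + (Im3 l)\<^sup>2 = (Im1 n)\<^sup>2 + (Im2 n)\<^sup>2 + (Im3 n)\<^sup>2"
  shows "\<exists>w. w \<noteq> 0 \<and> n * w = w * l"
proof -
  obtain b u1 u2 u3 where l: "l = Quat b u1 u2 u3"
    using assms(1) by (cases l) simp
  obtain v1 v2 v3 where n: "n = Quat b v1 v2 v3"
    using assms(1) by (cases n) (simp add: l)
  define r where "r = u1 * u1 + u2 * u2 + u3 * u3"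
  have r: "r = v1 * v1 + v2 * v2 + v3 * v3"
    using assms(2) by (simp add: r_def l n power2_eq_square)
  define w where "w = Quat (r + (v1 * u1 + v2 * u2 + v3 * u3))
    (v3 * u2 - v2 * u3) (v1 * u3 - v3 * u1) (v2 * u1 - v1 * u2)"
  show ?thesis
  proof (cases "w = 0")
    case False
    have rx: "r * x = (v1 * v1 + v2 * v2 + v3 * v3) * x" for x
      using r by simp
    have "n * w = w * l"
      using rx[of u1] rx[of u2] rx[of u3] rx[of v1] rx[of v2] rx[of v3]
      by (intro quat_eqI) (simp_all add: w_def l n r_def times_quat_def algebra_simps)
    with False show ?thesis by blast
  next
    case True
    then have "r + (v1 * u1 + v2 * u2 + v3 * u3) = 0"
      by (simp add: w_def quat_eq_0_iff)
    then have "(u1 + v1)\<^sup>2 + (u2 + v2)\<^sup>2 + (u3 + v3)\<^sup>2 = 0"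
      using r by (simp add: r_def power2_eq_square algebra_simps)
    then have v: "v1 = - u1" "v2 = - u2" "v3 = - u3"
      by (smt (verit) zero_le_power2 power2_less_eq_zero_iff)+
    define w' where "w' = (if u1 = 0 \<and> u2 = 0 then Quat 0 1 0 0 else Quat 0 u2 (- u1) 0)"
    have "n * w' = w' * l"
      by (intro quat_eqI) (simp_all add: w'_def l n v times_quat_def algebra_simps)
    moreover have "w' \<noteq> 0"
      by (simp add: w'_def quat_eq_0_iff)
    ultimately show ?thesis by blast
  qed
qed

datatype 'a mat2 = Mat2 (m11: 'a) (m12: 'a) (m21: 'a) (m22: 'a)

lemma mat2_eqI:
  "m11 X = m11 Y \<Longrightarrow> m12 X = m12 Y \<Longrightarrow> m21 X = m21 Y \<Longrightarrow> m22 X = m22 Y \<Longrightarrow> X = Y"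
  by (cases X, cases Y) simp

instantiation mat2 :: (ring_1) ring_1
begin
definition "0 = Mat2 0 0 0 0"
definition "1 = Mat2 1 0 0 1"
definition "X + Y = Mat2 (m11 X + m11 Y) (m12 X + m12 Y) (m21 X + m21 Y) (m22 X + m22 Y)"
definition "X - Y = Mat2 (m11 X - m11 Y) (m12 X - m12 Y) (m21 X - m21 Y) (m22 X - m22 Y)"
definition "- X = Mat2 (- m11 X) (- m12 X) (- m21 X) (- m22 X)"
definition "X * Y = Mat2
   (m11 X * m11 Y + m12 X * m21 Y) (m11 X * m12 Y + m12 X * m22 Y)
   (m21 X * m11 Y + m22 X * m21 Y) (m21 X * m12 Y + m22 X * m22 Y)"
instance
proof
  show "(0::'a mat2) \<noteq> 1" by (simp add: zero_mat2_def one_mat2_def)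
qed (rule mat2_eqI; simp add: zero_mat2_def one_mat2_def plus_mat2_def
      minus_mat2_def uminus_mat2_def times_mat2_def algebra_simps)+
end

lemma Mat2_times_Mat2: "Mat2 a b c d * Mat2 a' b' c' d' =
  Mat2 (a * a' + b * c') (a * b' + b * d') (c * a' + d * c') (c * b' + d * d')"
  by (simp add: times_mat2_def)

lemma Mat2_plus_Mat2: "Mat2 a b c d + Mat2 a' b' c' d' = Mat2 (a + a') (b + b') (c + c') (d + d')"
  by (simp add: plus_mat2_def)

lemma one_mat2_eq: "1 = Mat2 1 0 0 1"
  by (simp add: one_mat2_def)

definition mat2_nth :: "'a mat2 \<Rightarrow> nat \<Rightarrow> nat \<Rightarrow> 'a" where
  "mat2_nth M i k =
     (if i = 0 then (if k = 0 then m11 M else m12 M) else (if k = 0 then m21 M else m22 M))"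

definition mat2_mulv :: "'a::ring_1 mat2 \<Rightarrow> 'a \<times> 'a \<Rightarrow> 'a \<times> 'a" where
  "mat2_mulv M u = (m11 M * fst u + m12 M * snd u, m21 M * fst u + m22 M * snd u)"

definition vec_mulm2 :: "'a::ring_1 \<times> 'a \<Rightarrow> 'a mat2 \<Rightarrow> 'a \<times> 'a" where
  "vec_mulm2 r M = (fst r * m11 M + snd r * m21 M, fst r * m12 M + snd r * m22 M)"

definition dyad :: "'a::ring_1 \<times> 'a \<Rightarrow> 'a \<Rightarrow> 'a \<times> 'a \<Rightarrow> 'a mat2" where
  "dyad u \<beta> r = Mat2 (fst u * \<beta> * fst r) (fst u * \<beta> * snd r)
     (snd u * \<beta> * fst r) (snd u * \<beta> * snd r)"

lemma mult_dyad: "G * dyad u \<beta> r = dyad (mat2_mulv G u) \<beta> r"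
  by (rule mat2_eqI) (simp_all add: dyad_def mat2_mulv_def times_mat2_def algebra_simps)

lemma dyad_mult: "dyad u \<beta> r * H = dyad u \<beta> (vec_mulm2 r H)"
  by (rule mat2_eqI) (simp_all add: dyad_def vec_mulm2_def times_mat2_def algebra_simps)

definition in_dyad_span :: "(nat \<Rightarrow> 'a::ring_1 \<times> 'a) \<Rightarrow> (nat \<Rightarrow> 'a \<times> 'a) \<Rightarrow> 'a mat2 \<Rightarrow> bool" where
  "in_dyad_span a c M \<longleftrightarrow> (\<exists>\<beta>. M = (\<Sum>t<3. dyad (a t) (\<beta> t) (c t)))"

lemma in_dyad_spanI:
  assumes "M = dyad (a 0) \<beta>\<^sub>0 (c 0) + dyad (a 1) \<beta>\<^sub>1 (c 1) + dyad (a 2) \<beta>\<^sub>2 (c 2)"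
  shows "in_dyad_span a c M"
  unfolding in_dyad_span_def
  by (rule exI[of _ "(!) [\<beta>\<^sub>0, \<beta>\<^sub>1, \<beta>\<^sub>2]"]) (simp add: assms eval_nat_numeral add.assoc)

lemma in_dyad_span_mult_left:
  "in_dyad_span a c M \<Longrightarrow> in_dyad_span (\<lambda>t. mat2_mulv G (a t)) c (G * M)"
  by (auto simp: in_dyad_span_def sum_distrib_left mult_dyad)

lemma in_dyad_span_mult_right:
  "in_dyad_span a c M \<Longrightarrow> in_dyad_span a (\<lambda>t. vec_mulm2 (c t) H) (M * H)"
  by (auto simp: in_dyad_span_def sum_distrib_right dyad_mult)

definition common_dyad_span :: "'a::ring_1 mat2 \<Rightarrow> 'a mat2 \<Rightarrow> 'a mat2 \<Rightarrow> bool" where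
  "common_dyad_span A B C \<longleftrightarrow>
     (\<exists>a c. in_dyad_span a c A \<and> in_dyad_span a c B \<and> in_dyad_span a c C)"

lemma common_dyad_spanI:
  assumes "in_dyad_span a c A" "in_dyad_span a c B" "in_dyad_span a c C"
  shows "common_dyad_span A B C"
  using assms unfolding common_dyad_span_def by blast

lemma common_dyad_span_swap:
  "common_dyad_span A B C \<Longrightarrow> common_dyad_span B A C"
  "common_dyad_span A B C \<Longrightarrow> common_dyad_span A C B"
  unfolding common_dyad_span_def by blast+

lemma common_dyad_span_mult_left:
  "common_dyad_span A B C \<Longrightarrow> common_dyad_span (G * A) (G * B) (G * C)"
  unfolding common_dyad_span_def by (blast intro: in_dyad_span_mult_left)

lemma common_dyad_span_mult_right:
  "common_dyad_span A B C \<Longrightarrow> common_dyad_span (A * H) (B * H) (C * H)"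
  unfolding common_dyad_span_def by (blast intro: in_dyad_span_mult_right)

lemma common_dyad_span_similar:
  assumes "P * Q = 1" and "common_dyad_span (Q * A * P) (Q * B * P) (Q * C * P)"
  shows "common_dyad_span A B C"
proof -
  have "P * (Q * X * P) * Q = X" for X
    by (metis assms(1) mult.assoc mult_1_left mult_1_right)
  then show ?thesis
    using common_dyad_span_mult_right[OF common_dyad_span_mult_left[OF assms(2)], of P Q] by simp
qed

lemma common_dyad_span_rank_one:
  "common_dyad_span (dyad u\<^sub>0 1 r\<^sub>0) (dyad u\<^sub>1 1 r\<^sub>1) (dyad u\<^sub>2 1 r\<^sub>2)"
proof (rule common_dyad_spanI)
  let ?a = "(!) [u\<^sub>0, u\<^sub>1, u\<^sub>2]" and ?c = "(!) [r\<^sub>0, r\<^sub>1, r\<^sub>2]"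
  have 0: "dyad u 0 r = 0" for u r :: "'a \<times> 'a"
    by (simp add: dyad_def zero_mat2_def)
  show "in_dyad_span ?a ?c (dyad u\<^sub>0 1 r\<^sub>0)"
    by (rule in_dyad_spanI[where \<beta>\<^sub>0 = 1 and \<beta>\<^sub>1 = 0 and \<beta>\<^sub>2 = 0]) (simp add: 0)
  show "in_dyad_span ?a ?c (dyad u\<^sub>1 1 r\<^sub>1)"
    by (rule in_dyad_spanI[where \<beta>\<^sub>0 = 0 and \<beta>\<^sub>1 = 1 and \<beta>\<^sub>2 = 0]) (simp add: 0)
  show "in_dyad_span ?a ?c (dyad u\<^sub>2 1 r\<^sub>2)"
    by (rule in_dyad_spanI[where \<beta>\<^sub>0 = 0 and \<beta>\<^sub>1 = 0 and \<beta>\<^sub>2 = 1]) (simp add: 0)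
qed

lemma common_dyad_span_one_diag:
  fixes d\<^sub>1 d\<^sub>2 :: "'a::division_ring"
  shows "common_dyad_span 1 (Mat2 d\<^sub>1 0 0 d\<^sub>2) (Mat2 c\<^sub>1\<^sub>1 c\<^sub>1\<^sub>2 c\<^sub>2\<^sub>1 c\<^sub>2\<^sub>2)"
proof (cases "c\<^sub>1\<^sub>2 = 0")
  case False
  let ?a = "(!) [(1, 0), (0, 1), (1, c\<^sub>2\<^sub>1 * inverse c\<^sub>1\<^sub>2)]" and ?c = "(!) [(1, 0), (0, 1), (1, 1)]"
  show ?thesis
  proof (rule common_dyad_spanI)
    show "in_dyad_span ?a ?c 1"
      by (rule in_dyad_spanI[where \<beta>\<^sub>0 = 1 and \<beta>\<^sub>1 = 1 and \<beta>\<^sub>2 = 0])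
        (simp add: dyad_def one_mat2_eq Mat2_plus_Mat2)
    show "in_dyad_span ?a ?c (Mat2 d\<^sub>1 0 0 d\<^sub>2)"
      by (rule in_dyad_spanI[where \<beta>\<^sub>0 = d\<^sub>1 and \<beta>\<^sub>1 = d\<^sub>2 and \<beta>\<^sub>2 = 0])
        (simp add: dyad_def Mat2_plus_Mat2)
    show "in_dyad_span ?a ?c (Mat2 c\<^sub>1\<^sub>1 c\<^sub>1\<^sub>2 c\<^sub>2\<^sub>1 c\<^sub>2\<^sub>2)"
      by (rule in_dyad_spanI[where \<beta>\<^sub>0 = "c\<^sub>1\<^sub>1 - c\<^sub>1\<^sub>2" and \<beta>\<^sub>1 = "c\<^sub>2\<^sub>2 - c\<^sub>2\<^sub>1" and \<beta>\<^sub>2 = c\<^sub>1\<^sub>2])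
        (simp add: dyad_def Mat2_plus_Mat2 False mult.assoc)
  qed
next
  case True
  let ?a = "(!) [(1, 0), (0, 1), (0, 1)]" and ?c = "(!) [(1, 0), (0, 1), (1, 0)]"
  show ?thesis
  proof (rule common_dyad_spanI)
    show "in_dyad_span ?a ?c 1"
      by (rule in_dyad_spanI[where \<beta>\<^sub>0 = 1 and \<beta>\<^sub>1 = 1 and \<beta>\<^sub>2 = 0])
        (simp add: dyad_def one_mat2_eq Mat2_plus_Mat2)
    show "in_dyad_span ?a ?c (Mat2 d\<^sub>1 0 0 d\<^sub>2)"
      by (rule in_dyad_spanI[where \<beta>\<^sub>0 = d\<^sub>1 and \<beta>\<^sub>1 = d\<^sub>2 and \<beta>\<^sub>2 = 0])
        (simp add: dyad_def Mat2_plus_Mat2)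
    show "in_dyad_span ?a ?c (Mat2 c\<^sub>1\<^sub>1 c\<^sub>1\<^sub>2 c\<^sub>2\<^sub>1 c\<^sub>2\<^sub>2)"
      by (rule in_dyad_spanI[where \<beta>\<^sub>0 = c\<^sub>1\<^sub>1 and \<beta>\<^sub>1 = c\<^sub>2\<^sub>2 and \<beta>\<^sub>2 = c\<^sub>2\<^sub>1])
        (simp add: dyad_def Mat2_plus_Mat2 True)
  qed
qed

lemma mat2_triangularize:
  fixes B :: "'a::division_ring mat2"
  assumes "v \<noteq> (0, 0)" and "mat2_mulv B v = (fst v * l, snd v * l)"
  shows "\<exists>P Q. P * Q = 1 \<and> Q * P = 1 \<and> m21 (Q * B * P) = 0"
proof -
  obtain v\<^sub>0 v\<^sub>1 where v: "v = (v\<^sub>0, v\<^sub>1)" by fastforce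
  obtain b\<^sub>1\<^sub>1 b\<^sub>1\<^sub>2 b\<^sub>2\<^sub>1 b\<^sub>2\<^sub>2 where B: "B = Mat2 b\<^sub>1\<^sub>1 b\<^sub>1\<^sub>2 b\<^sub>2\<^sub>1 b\<^sub>2\<^sub>2" by (cases B)
  have ev: "b\<^sub>1\<^sub>1 * v\<^sub>0 + b\<^sub>1\<^sub>2 * v\<^sub>1 = v\<^sub>0 * l" "b\<^sub>2\<^sub>1 * v\<^sub>0 + b\<^sub>2\<^sub>2 * v\<^sub>1 = v\<^sub>1 * l"
    using assms(2) by (simp_all add: v B mat2_mulv_def)
  show ?thesis
  proof (cases "v\<^sub>0 = 0")
    case False
    define P where "P = Mat2 v\<^sub>0 0 v\<^sub>1 1"
    define Q where "Q = Mat2 (inverse v\<^sub>0) 0 (- (v\<^sub>1 * inverse v\<^sub>0)) 1"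
    have "m21 (Q * B * P) = v\<^sub>1 * l - v\<^sub>1 * inverse v\<^sub>0 * (v\<^sub>0 * l)"
      by (simp add: P_def Q_def B Mat2_times_Mat2 algebra_simps flip: ev)
    also have "\<dots> = 0"
      using False by (simp add: mult.assoc flip: mult.assoc[of "inverse v\<^sub>0"])
    finally show ?thesis
      using False
      by (intro exI[of _ P] exI[of _ Q]) (simp add: P_def Q_def Mat2_times_Mat2 one_mat2_eq mult.assoc)
  next
    case True
    then have "v\<^sub>1 \<noteq> 0" using assms(1) v by simp
    define P where "P = Mat2 0 1 v\<^sub>1 0"
    define Q where "Q = Mat2 0 (inverse v\<^sub>1) 1 0"
    have "m21 (Q * B * P) = 0"
      using ev(1) True by (simp add: P_def Q_def B Mat2_times_Mat2)
    then show ?thesis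
      using \<open>v\<^sub>1 \<noteq> 0\<close>
      by (intro exI[of _ P] exI[of _ Q]) (simp add: P_def Q_def Mat2_times_Mat2 one_mat2_eq)
  qed
qed

lemma mat2_invertible_or_rank_one:
  fixes M :: "'a::division_ring mat2"
  shows "(\<exists>N. M * N = 1) \<or> (\<exists>u r. M = dyad u 1 r)"
proof -
  obtain a b c d where M: "M = Mat2 a b c d" by (cases M)
  show ?thesis
  proof (cases "a = 0")
    case False
    define s where "s = d - c * inverse a * b"
    show ?thesis
    proof (cases "s = 0")
      case True
      have "M = dyad (1, c * inverse a) 1 (a, b)"
        using True False by (simp add: M dyad_def s_def mult.assoc)
      then show ?thesis by blast
    next
      case s: False
      define N where "N = Mat2 (inverse a + inverse a * b * inverse s * c * inverse a)
        (- (inverse a * b * inverse s)) (- (inverse s * c * inverse a)) (inverse s)"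
      have a: "a * (inverse a * x) = x" and s': "s * (inverse s * x) = x" for x
        using False s by (simp_all flip: mult.assoc)
      have "d = s + c * inverse a * b"
        by (simp add: s_def)
      then have "M * N = 1"
        using False s by (simp add: M N_def Mat2_times_Mat2 one_mat2_eq algebra_simps a s')
      then show ?thesis by blast
    qed
  next
    case True
    consider "b = 0" | "c = 0" | "b \<noteq> 0" "c \<noteq> 0" by blast
    then show ?thesis
    proof cases
      case 1
      then have "M = dyad (0, 1) 1 (c, d)" by (simp add: M True dyad_def)
      then show ?thesis by blast
    next
      case 2
      then have "M = dyad (b, d) 1 (0, 1)" by (simp add: M True dyad_def)
      then show ?thesis by blast
    next
      case 3
      have "M * Mat2 (- (inverse c * d * inverse b)) (inverse c) (inverse b) 0 = 1"
        using 3 by (simp add: M True Mat2_times_Mat2 one_mat2_eq flip: mult.assoc)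
      then show ?thesis by blast
    qed
  qed
qed

text \<open>Writing q = z + w j with complex z and w, left multiplication by q is C-linear for the
  right C-vector space structure of H = C + C j, with matrix [[z, -w], [cnj w, cnj z]]. Doing this
  entrywise turns M into a complex 4 x 4 matrix, and each of its eigenvectors gives a right
  eigenvector of M.\<close>
definition quat_mat2_complex :: "quat mat2 \<Rightarrow> complex mat" where
  "quat_mat2_complex M = mat 4 4 (\<lambda>(i, j).
     let z = (\<lambda>q. Complex (quat.Re q) (Im1 q)); w = (\<lambda>q. Complex (Im2 q) (Im3 q)) in
     if i < 2 then (if j < 2 then z (mat2_nth M i j) else - w (mat2_nth M i (j - 2)))
     else (if j < 2 then cnj (w (mat2_nth M (i - 2) j)) else cnj (z (mat2_nth M (i - 2) (j - 2)))))"

lemma quat_mat2_right_eigenvector: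
  fixes M :: "quat mat2"
  shows "\<exists>v l. v \<noteq> (0, 0) \<and> mat2_mulv M v = (fst v * l, snd v * l)"
proof -
  have C: "quat_mat2_complex M \<in> carrier_mat 4 4"
    by (simp add: quat_mat2_complex_def)
  obtain k v where "eigenvector (quat_mat2_complex M) v k"
    using spectrum_non_empty[OF C] unfolding spectrum_def eigenvalue_def by auto
  then have v: "dim_vec v = 4" "v \<noteq> 0\<^sub>v 4" and eq: "quat_mat2_complex M *\<^sub>v v = k \<cdot>\<^sub>v v"
    using C unfolding eigenvector_def by auto
  have row: "(\<Sum>j<4. quat_mat2_complex M $$ (i, j) * v $ j) = k * v $ i" if "i < 4" for i
    using arg_cong[OF eq, of "\<lambda>x. x $ i"] that v C
    by (simp add: scalar_prod_def row_def atLeast0LessThan)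
  define x where "x r = Quat (Re (v $ r)) (Im (v $ r)) (Re (v $ (r + 2))) (- Im (v $ (r + 2)))" for r
  define x\<^sub>0 x\<^sub>1 where "x\<^sub>0 = x 0" and "x\<^sub>1 = x 1"
  define l where "l = Quat (Re k) (Im k) 0 0"
  have "mat2_mulv M (x\<^sub>0, x\<^sub>1) = (x\<^sub>0 * l, x\<^sub>1 * l)"
    using row[of 0] row[of 1] row[of 2] row[of 3]
    by (cases M) (simp add: mat2_mulv_def x\<^sub>0_def x\<^sub>1_def x_def l_def quat_mat2_complex_def
        mat2_nth_def eval_nat_numeral complex_eq_iff times_quat_def plus_quat_def algebra_simps)
  moreover have "(x\<^sub>0, x\<^sub>1) \<noteq> (0, 0)"
  proof
    assume "(x\<^sub>0, x\<^sub>1) = (0, 0)"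
    then have "v $ i = 0" if "i < 4" for i
      using that by (auto simp: x\<^sub>0_def x\<^sub>1_def x_def quat_eq_0_iff complex_eq_iff less_Suc_eq eval_nat_numeral)
    then have "v = 0\<^sub>v 4"
      using v(1) by (intro eq_vecI) simp_all
    with v(2) show False ..
  qed
  ultimately show ?thesis by fastforce
qed

lemma common_dyad_span_one_upper:
  fixes u\<^sub>1\<^sub>1 :: quat
  shows "common_dyad_span 1 (Mat2 u\<^sub>1\<^sub>1 u\<^sub>1\<^sub>2 0 u\<^sub>2\<^sub>2) (Mat2 c\<^sub>1\<^sub>1 c\<^sub>1\<^sub>2 c\<^sub>2\<^sub>1 c\<^sub>2\<^sub>2)"
    (is "common_dyad_span 1 ?U ?C")
proof (cases "quat_charpoly u\<^sub>2\<^sub>2 u\<^sub>1\<^sub>1 = 0")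
  case False
  obtain x where x: "u\<^sub>1\<^sub>1 * x - x * u\<^sub>2\<^sub>2 = - u\<^sub>1\<^sub>2"
    using quat_sylvester_solvable[OF False] by blast
  define S where "S = Mat2 1 x 0 (1::quat)"
  define S' where "S' = Mat2 1 (- x) 0 (1::quat)"
  have SS': "S * S' = 1" "S' * S = 1"
    by (simp_all add: S_def S'_def Mat2_times_Mat2 one_mat2_eq)
  have "S' * ?U * S = Mat2 u\<^sub>1\<^sub>1 (u\<^sub>1\<^sub>1 * x - x * u\<^sub>2\<^sub>2 + u\<^sub>1\<^sub>2) 0 u\<^sub>2\<^sub>2"
    by (simp add: S_def S'_def Mat2_times_Mat2 algebra_simps)
  then have "S' * ?U * S = Mat2 u\<^sub>1\<^sub>1 0 0 u\<^sub>2\<^sub>2"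
    by (simp add: x)
  moreover obtain c\<^sub>1\<^sub>1' c\<^sub>1\<^sub>2' c\<^sub>2\<^sub>1' c\<^sub>2\<^sub>2' where "S' * ?C * S = Mat2 c\<^sub>1\<^sub>1' c\<^sub>1\<^sub>2' c\<^sub>2\<^sub>1' c\<^sub>2\<^sub>2'"
    by (cases "S' * ?C * S")
  ultimately have "common_dyad_span (S' * 1 * S) (S' * ?U * S) (S' * ?C * S)"
    using common_dyad_span_one_diag by (simp add: SS')
  then show ?thesis
    by (rule common_dyad_span_similar[OF SS'(1)])
next
  case True
  obtain w where w: "w \<noteq> 0" "u\<^sub>2\<^sub>2 * w = w * u\<^sub>1\<^sub>1"
    using quat_similar_of_eq_Re_norm[OF quat_charpoly_eq_0D[OF True]] by blast
  show ?thesis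
  proof (cases "c\<^sub>2\<^sub>1 = 0")
    case True
    let ?a = "(!) [(1, 0), (1, 0), (0, 1)]" and ?c = "(!) [(1, 0), (0, 1), (0, 1)]"
    show ?thesis
    proof (rule common_dyad_spanI)
      show "in_dyad_span ?a ?c 1"
        by (rule in_dyad_spanI[where \<beta>\<^sub>0 = 1 and \<beta>\<^sub>1 = 0 and \<beta>\<^sub>2 = 1])
          (simp add: dyad_def one_mat2_eq Mat2_plus_Mat2)
      show "in_dyad_span ?a ?c ?U"
        by (rule in_dyad_spanI[where \<beta>\<^sub>0 = u\<^sub>1\<^sub>1 and \<beta>\<^sub>1 = u\<^sub>1\<^sub>2 and \<beta>\<^sub>2 = u\<^sub>2\<^sub>2])
          (simp add: dyad_def Mat2_plus_Mat2)
      show "in_dyad_span ?a ?c ?C"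
        by (rule in_dyad_spanI[where \<beta>\<^sub>0 = c\<^sub>1\<^sub>1 and \<beta>\<^sub>1 = c\<^sub>1\<^sub>2 and \<beta>\<^sub>2 = c\<^sub>2\<^sub>2])
          (simp add: dyad_def Mat2_plus_Mat2 True)
    qed
  next
    case False
    define y where "y = inverse c\<^sub>2\<^sub>1 * (c\<^sub>2\<^sub>2 - w * c\<^sub>1\<^sub>1 * inverse w)"
    let ?a = "(!) [(1, 0), (1, w), (0, 1)]" and ?c = "(!) [(0, 1), (1, y + inverse w), (1, y)]"
    have u\<^sub>2\<^sub>2: "w * u\<^sub>1\<^sub>1 * inverse w = u\<^sub>2\<^sub>2"
      using w by (metis mult.assoc mult_1_right right_inverse)
    have c\<^sub>2\<^sub>2: "c\<^sub>2\<^sub>1 * y = c\<^sub>2\<^sub>2 - w * c\<^sub>1\<^sub>1 * inverse w"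
      using False by (simp add: y_def flip: mult.assoc)
    show ?thesis
    proof (rule common_dyad_spanI)
      show "in_dyad_span ?a ?c 1"
        by (rule in_dyad_spanI[where \<beta>\<^sub>0 = "- (y + inverse w)" and \<beta>\<^sub>1 = 1 and \<beta>\<^sub>2 = "- w"])
          (simp add: dyad_def one_mat2_eq Mat2_plus_Mat2 algebra_simps w(1))
      show "in_dyad_span ?a ?c ?U"
        by (rule in_dyad_spanI[where \<beta>\<^sub>0 = "u\<^sub>1\<^sub>2 - u\<^sub>1\<^sub>1 * (y + inverse w)" and \<beta>\<^sub>1 = u\<^sub>1\<^sub>1
              and \<beta>\<^sub>2 = "- (w * u\<^sub>1\<^sub>1)"])
          (simp add: dyad_def Mat2_plus_Mat2 algebra_simps flip: u\<^sub>2\<^sub>2)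
      show "in_dyad_span ?a ?c ?C"
        by (rule in_dyad_spanI[where \<beta>\<^sub>0 = "c\<^sub>1\<^sub>2 - c\<^sub>1\<^sub>1 * (y + inverse w)" and \<beta>\<^sub>1 = c\<^sub>1\<^sub>1
              and \<beta>\<^sub>2 = "c\<^sub>2\<^sub>1 - w * c\<^sub>1\<^sub>1"])
          (simp add: dyad_def Mat2_plus_Mat2 algebra_simps c\<^sub>2\<^sub>2)
    qed
  qed
qed

lemma common_dyad_span_one:
  fixes B C :: "quat mat2"
  shows "common_dyad_span 1 B C"
proof -
  obtain v l where "v \<noteq> (0, 0)" "mat2_mulv B v = (fst v * l, snd v * l)"
    using quat_mat2_right_eigenvector by blast
  then obtain P Q where PQ: "P * Q = 1" "Q * P = 1" and "m21 (Q * B * P) = 0"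
    using mat2_triangularize by blast
  then obtain u\<^sub>1\<^sub>1 u\<^sub>1\<^sub>2 u\<^sub>2\<^sub>2 where "Q * B * P = Mat2 u\<^sub>1\<^sub>1 u\<^sub>1\<^sub>2 0 u\<^sub>2\<^sub>2"
    by (cases "Q * B * P") auto
  moreover obtain c\<^sub>1\<^sub>1 c\<^sub>1\<^sub>2 c\<^sub>2\<^sub>1 c\<^sub>2\<^sub>2 where "Q * C * P = Mat2 c\<^sub>1\<^sub>1 c\<^sub>1\<^sub>2 c\<^sub>2\<^sub>1 c\<^sub>2\<^sub>2"
    by (cases "Q * C * P")
  ultimately have "common_dyad_span (Q * 1 * P) (Q * B * P) (Q * C * P)"
    using common_dyad_span_one_upper by (simp add: PQ(2))
  then show ?thesis
    by (rule common_dyad_span_similar[OF PQ(1)])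
qed

lemma common_dyad_span_of_invertible:
  fixes X :: "quat mat2"
  assumes "X * N = 1"
  shows "common_dyad_span X Y Z"
proof -
  have "common_dyad_span (X * 1) (X * (N * Y)) (X * (N * Z))"
    by (rule common_dyad_span_mult_left[OF common_dyad_span_one])
  then show ?thesis
    by (simp add: assms flip: mult.assoc)
qed

theorem common_dyad_span_quat:
  fixes A B C :: "quat mat2"
  shows "common_dyad_span A B C"
proof (cases "\<exists>N. A * N = 1")
  case True
  then show ?thesis by (blast intro: common_dyad_span_of_invertible)
next
  case nA: False
  show ?thesis
  proof (cases "\<exists>N. B * N = 1")
    case True
    then show ?thesis by (blast intro: common_dyad_span_of_invertible common_dyad_span_swap)
  next
    case nB: False
    show ?thesis
    proof (cases "\<exists>N. C * N = 1")
      case True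
      then show ?thesis by (blast intro: common_dyad_span_of_invertible common_dyad_span_swap)
    next
      case False
      then show ?thesis
        using nA nB mat2_invertible_or_rank_one[of A] mat2_invertible_or_rank_one[of B]
          mat2_invertible_or_rank_one[of C]
        by (auto intro: common_dyad_span_rank_one)
    qed
  qed
qed

lemma tensor_rank_le_sum:
  assumes "\<forall>i<n\<^sub>1. \<forall>j<n\<^sub>2. \<forall>k<n\<^sub>3. T i j k = (\<Sum>t<r. a t i * b t j * c t k)"
  shows "tensor_rank n\<^sub>1 n\<^sub>2 n\<^sub>3 T \<le> r"
proof -
  define S :: "nat \<Rightarrow> qtensor" where "S t = (\<lambda>i j k. a t i * b t j * c t k)" for t
  define nonzero :: "qtensor \<Rightarrow> bool" where
    "nonzero X \<longleftrightarrow> (\<exists>i<n\<^sub>1. \<exists>j<n\<^sub>2. \<exists>k<n\<^sub>3. X i j k \<noteq> 0)" for X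
  define Ss where "Ss = filter nonzero (map S [0..<r])"
  have "\<forall>X\<in>set Ss. simple_tensor n\<^sub>1 n\<^sub>2 n\<^sub>3 X"
  proof
    fix X assume "X \<in> set Ss"
    then obtain t where "nonzero (S t)" "X = S t"
      by (auto simp: Ss_def)
    then show "simple_tensor n\<^sub>1 n\<^sub>2 n\<^sub>3 X"
      unfolding simple_tensor_def nonzero_def S_def by blast
  qed
  moreover have "\<forall>i<n\<^sub>1. \<forall>j<n\<^sub>2. \<forall>k<n\<^sub>3. T i j k = (\<Sum>X\<leftarrow>Ss. X i j k)"
  proof (intro allI impI)
    fix i j k assume ijk: "i < n\<^sub>1" "j < n\<^sub>2" "k < n\<^sub>3"
    have "(\<Sum>X\<leftarrow>Ss. X i j k) = (\<Sum>X\<leftarrow>map S [0..<r]. X i j k)"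
      unfolding Ss_def using ijk by (intro sum_list_map_filter) (auto simp: nonzero_def)
    also have "\<dots> = (\<Sum>t<r. a t i * b t j * c t k)"
      by (simp add: S_def interv_sum_list_conv_sum_set_nat atLeast0LessThan comp_def)
    finally show "T i j k = (\<Sum>X\<leftarrow>Ss. X i j k)"
      using assms ijk by simp
  qed
  ultimately have "tensor_rank n\<^sub>1 n\<^sub>2 n\<^sub>3 T \<le> length Ss"
    unfolding tensor_rank_def by (intro Least_le) blast
  also have "\<dots> \<le> r"
    using length_filter_le[of nonzero "map S [0..<r]"] by (simp add: Ss_def)
  finally show ?thesis .
qed

definition pair_nth :: "'a \<times> 'a \<Rightarrow> nat \<Rightarrow> 'a" where
  "pair_nth u i = (if i = 0 then fst u else snd u)"

definition mat2_of :: "(nat \<Rightarrow> nat \<Rightarrow> 'a) \<Rightarrow> 'a mat2" where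
  "mat2_of M = Mat2 (M 0 0) (M 0 1) (M 1 0) (M 1 1)"

lemma mat2_nth_sum: "mat2_nth (\<Sum>t\<in>S. f t) i k = (\<Sum>t\<in>S. mat2_nth (f t) i k)"
  by (rule sum_comp_morphism[of "\<lambda>X. mat2_nth X i k", unfolded comp_def, symmetric])
    (simp_all add: mat2_nth_def zero_mat2_def plus_mat2_def)

lemma mat2_nth_dyad: "mat2_nth (dyad u \<beta> r) i k = pair_nth u i * \<beta> * pair_nth r k"
  by (simp add: mat2_nth_def pair_nth_def dyad_def)

lemma mat2_nth_mat2_of: "i < 2 \<Longrightarrow> k < 2 \<Longrightarrow> mat2_nth (mat2_of M) i k = M i k"
  by (auto simp: mat2_nth_def mat2_of_def less_2_cases_iff)

lemma in_dyad_span_entries: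
  assumes "in_dyad_span a c (mat2_of M)"
  shows "\<exists>\<beta>. \<forall>i<2. \<forall>k<2. M i k = (\<Sum>t<3. pair_nth (a t) i * \<beta> t * pair_nth (c t) k)"
proof -
  obtain \<beta> where \<beta>: "mat2_of M = (\<Sum>t<3. dyad (a t) (\<beta> t) (c t))"
    using assms unfolding in_dyad_span_def by blast
  have "M i k = (\<Sum>t<3. pair_nth (a t) i * \<beta> t * pair_nth (c t) k)" if "i < 2" "k < 2" for i k
    using arg_cong[OF \<beta>, of "\<lambda>X. mat2_nth X i k"] that
    by (simp add: mat2_nth_mat2_of mat2_nth_sum mat2_nth_dyad)
  then show ?thesis by blast
qed

theorem mainTheorem9:
  fixes A B C :: "nat \<Rightarrow> nat \<Rightarrow> quat"
  shows "tensor_rank 2 3 2 (\<lambda>i j k. ([A, B, C] ! j) i k) \<le> 3"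
proof -
  obtain a c where span: "in_dyad_span a c (mat2_of A)" "in_dyad_span a c (mat2_of B)"
      "in_dyad_span a c (mat2_of C)"
    using common_dyad_span_quat unfolding common_dyad_span_def by blast
  obtain \<beta>\<^sub>A where A: "\<forall>i<2. \<forall>k<2. A i k = (\<Sum>t<3. pair_nth (a t) i * \<beta>\<^sub>A t * pair_nth (c t) k)"
    using in_dyad_span_entries[OF span(1)] by blast
  obtain \<beta>\<^sub>B where B: "\<forall>i<2. \<forall>k<2. B i k = (\<Sum>t<3. pair_nth (a t) i * \<beta>\<^sub>B t * pair_nth (c t) k)"
    using in_dyad_span_entries[OF span(2)] by blast
  obtain \<beta>\<^sub>C where C: "\<forall>i<2. \<forall>k<2. C i k = (\<Sum>t<3. pair_nth (a t) i * \<beta>\<^sub>C t * pair_nth (c t) k)"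
    using in_dyad_span_entries[OF span(3)] by blast
  have "\<forall>i<2. \<forall>j<3. \<forall>k<2. ([A, B, C] ! j) i k =
      (\<Sum>t<3. pair_nth (a t) i * [\<beta>\<^sub>A t, \<beta>\<^sub>B t, \<beta>\<^sub>C t] ! j * pair_nth (c t) k)"
  proof (intro allI impI)
    fix i j k :: nat assume "i < 2" "j < 3" "k < 2"
    then consider "j = 0" | "j = 1" | "j = 2" by linarith
    then show "([A, B, C] ! j) i k =
        (\<Sum>t<3. pair_nth (a t) i * [\<beta>\<^sub>A t, \<beta>\<^sub>B t, \<beta>\<^sub>C t] ! j * pair_nth (c t) k)"
      using A B C \<open>i < 2\<close> \<open>k < 2\<close> by cases simp_all
  qed
  then show ?thesis
    by (rule tensor_rank_le_sum)
qed

end
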